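(* Let $\mathcal{R},\mathcal{R}',\mathcal{C},\mathcal{C}'$ be partitions of $\{1,\ldots,n\}$ such that $\mathcal{R}'$ is finer than $\mathcal{R}$ and $\mathcal{C}'$ is finer than $\mathcal{C}$. Then $U^{\mathcal{R}\times\mathcal{C}'}$ and $U^{\mathcal{R}'\times\mathcal{C}}$ intersect orthogonally in $\mathbb{R}^{S_n}$ (with the standard inner product), and \[ U^{\mathcal{R}\times\mathcal{C}'}\cap U^{\mathcal{R}'\times\mathcal{C}}=U^{\mathcal{R}\times\mathcal{C}}. \]
   Context: $S_n$ is the group of permutations of $\{1,\ldots,n\}$. A partition $\mathcal{Z}=(Z_1,\ldots,Z_s)$ is finer than $\mathcal{W}=(W_1,\ldots,W_t)$ if every $Z_i$ is contained in some $W_j$. For partitions $\mathcal{R}=(R_i)$, $\mathcal{C}=(C_j)$ of $\{1,\ldots,n\}$, the product partition of the $n\times n$ board is $\mathcal{R}\times\mathcal{C}=(R_i\times C_j)$, and for $\pi\in S_n$ its marginal is the matrix $|\pi_{\mathcal{R}\times\mathcal{C}}|=(t_{ij})$ with $t_{ij}=|\{s:(s,\pi(s))\in R_i\times C_j\}|$. $U^{\mathcal{B}}=\{v\in\mathbb{R}^{S_n}: |\pi_{\mathcal{B}}|=|\sigma_{\mathcal{B}}|\Rightarrow v(\pi)=v(\sigma)\}$. Subspaces $U,V$ intersect orthogonally if the orthogonal projection of $U$ onto $V$ equals $U\cap V$ (equivalently, the orthogonal projections onto $U$ and $V$ commute). *)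

theory Defs
  imports Complex_Main "HOL-Library.Disjoint_Sets" "HOL-Combinatorics.Permutations"
begin

definition Sn :: "nat \<Rightarrow> (nat \<Rightarrow> nat) set" where
  "Sn n = {p. p permutes {1..n}}"

definition finer :: "'a set set \<Rightarrow> 'a set set \<Rightarrow> bool" where
  "finer Z W \<longleftrightarrow> (\<forall>Zi\<in>Z. \<exists>Wj\<in>W. Zi \<subseteq> Wj)"

definition prod_part :: "nat set set \<Rightarrow> nat set set \<Rightarrow> (nat \<times> nat) set set" where
  "prod_part R C = {A \<times> B | A B. A \<in> R \<and> B \<in> C}"

definition marginal :: "nat \<Rightarrow> (nat \<times> nat) set set \<Rightarrow> (nat \<Rightarrow> nat) \<Rightarrow> (nat \<times> nat) set \<Rightarrow> nat" where
  "marginal n B p = (\<lambda>X. if X \<in> B then card {s \<in> {1..n}. (s, p s) \<in> X} else 0)"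

definition RSn :: "nat \<Rightarrow> ((nat \<Rightarrow> nat) \<Rightarrow> real) set" where
  "RSn n = {v. \<forall>p. p \<notin> Sn n \<longrightarrow> v p = 0}"

definition U :: "nat \<Rightarrow> (nat \<times> nat) set set \<Rightarrow> ((nat \<Rightarrow> nat) \<Rightarrow> real) set" where
  "U n B = {v \<in> RSn n. \<forall>p\<in>Sn n. \<forall>q\<in>Sn n. marginal n B p = marginal n B q \<longrightarrow> v p = v q}"

definition ip :: "nat \<Rightarrow> ((nat \<Rightarrow> nat) \<Rightarrow> real) \<Rightarrow> ((nat \<Rightarrow> nat) \<Rightarrow> real) \<Rightarrow> real" where
  "ip n v w = (\<Sum>p\<in>Sn n. v p * w p)"

definition proj :: "nat \<Rightarrow> ((nat \<Rightarrow> nat) \<Rightarrow> real) set \<Rightarrow> ((nat \<Rightarrow> nat) \<Rightarrow> real) \<Rightarrow> ((nat \<Rightarrow> nat) \<Rightarrow> real)" where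
  "proj n V u = (THE w. w \<in> V \<and> (\<forall>x\<in>V. ip n (u - w) x = 0))"

definition intersect_orth :: "nat \<Rightarrow> ((nat \<Rightarrow> nat) \<Rightarrow> real) set \<Rightarrow> ((nat \<Rightarrow> nat) \<Rightarrow> real) set \<Rightarrow> bool" where
  "intersect_orth n U' V \<longleftrightarrow> proj n V ` U' = U' \<inter> V"

end

theory Submission
  imports Defs
begin

text \<open>
  For partitions R, C of {1..n} let Y(P) be the Young subgroup of permutations
  fixing every block of P setwise.  Two permutations have the same (R x C)-marginal iff they
  lie in the same double coset Y(C) p Y(R); hence U(R x C) consists exactly of the functions
  on S_n that are invariant under p \<mapsto> a \<circ> p \<circ> b for a in Y(C), b in Y(R).
  Refinement makes Young subgroups smaller, so U(R x C) lies in both spaces, while a function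
  in U(R x C') \<inter> U(R' x C) is right Y(R)-invariant (by the first space) and left
  Y(C)-invariant (by the second), hence lies in U(R x C).
  For the orthogonality, the projection of u \<in> U(R x C') onto U(R' x C) is the average of
  u over left translation by Y(C): this average is still right Y(R)-invariant, hence lies
  in U(R x C), and u minus it is orthogonal to every left Y(C)-invariant function.
\<close>

lemma partition_on_block_unique:
  assumes "partition_on S P" "A \<in> P" "B \<in> P" "x \<in> A" "x \<in> B"
  shows "A = B"
  using assms unfolding partition_on_def disjoint_def by blast

lemma partition_on_block_subset: "partition_on S P \<Longrightarrow> A \<in> P \<Longrightarrow> A \<subseteq> S"
  unfolding partition_on_def by blast

definition block :: "'a set set \<Rightarrow> 'a \<Rightarrow> 'a set" where
  "block P x = (THE A. A \<in> P \<and> x \<in> A)"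

lemma block_eq:
  assumes "partition_on S P" "A \<in> P" "x \<in> A"
  shows "block P x = A"
  unfolding block_def
proof (rule the_equality)
  show "A \<in> P \<and> x \<in> A" using assms(2,3) ..
  show "B = A" if "B \<in> P \<and> x \<in> B" for B
    using partition_on_block_unique[OF assms(1)] that assms(2,3) by blast
qed

lemma block_in:
  assumes "partition_on S P" "x \<in> S"
  shows "block P x \<in> P" and "x \<in> block P x"
proof -
  have "x \<in> \<Union>P" using partition_onD1[OF assms(1)] assms(2) by simp
  then obtain A where "A \<in> P" "x \<in> A" by blast
  then show "block P x \<in> P" "x \<in> block P x" using block_eq[OF assms(1)] by auto
qed

lemma block_eq_iff:
  assumes "partition_on S P" "x \<in> S" "A \<in> P"
  shows "block P x = A \<longleftrightarrow> x \<in> A"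
  using block_eq[OF assms(1,3)] block_in(2)[OF assms(1,2)] by blast

definition perm_group :: "nat \<Rightarrow> (nat \<Rightarrow> nat) set \<Rightarrow> bool" where
  "perm_group n H \<longleftrightarrow> H \<subseteq> Sn n \<and> id \<in> H \<and> (\<forall>a\<in>H. \<forall>b\<in>H. a \<circ> b \<in> H) \<and> (\<forall>a\<in>H. inv a \<in> H)"

lemma finite_Sn: "finite (Sn n)"
  unfolding Sn_def by (rule finite_permutations) simp

lemma perm_group_Sn: "perm_group n (Sn n)"
  unfolding perm_group_def Sn_def by (auto intro: permutes_id permutes_compose permutes_inv)

lemma perm_groupD:
  assumes "perm_group n H"
  shows "H \<subseteq> Sn n" "id \<in> H" "a \<in> H \<Longrightarrow> b \<in> H \<Longrightarrow> a \<circ> b \<in> H" "a \<in> H \<Longrightarrow> inv a \<in> H"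
  using assms unfolding perm_group_def by auto

lemma Sn_comp: "p \<in> Sn n \<Longrightarrow> q \<in> Sn n \<Longrightarrow> p \<circ> q \<in> Sn n"
  using perm_groupD(3)[OF perm_group_Sn] .

lemma perm_group_card_pos:
  assumes "perm_group n H"
  shows "card H > 0"
proof -
  have "finite H" using finite_subset[OF perm_groupD(1)[OF assms] finite_Sn] .
  then show ?thesis using perm_groupD(2)[OF assms] card_gt_0_iff by blast
qed

lemma sum_left_translate:
  assumes H: "perm_group n H" and a0: "a0 \<in> H"
  shows "(\<Sum>a\<in>H. f (a0 \<circ> a)) = (\<Sum>a\<in>H. f a)"
proof -
  have a0p: "a0 permutes {1..n}" using perm_groupD(1)[OF H] a0 unfolding Sn_def by blast
  have "bij_betw (\<lambda>a. a0 \<circ> a) H H"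
  proof (rule bij_betw_byWitness[where f'="\<lambda>a. inv a0 \<circ> a"])
    show "\<forall>a\<in>H. inv a0 \<circ> (a0 \<circ> a) = a" "\<forall>a\<in>H. a0 \<circ> (inv a0 \<circ> a) = a"
      by (simp_all add: o_assoc permutes_inv_o[OF a0p])
    show "(\<lambda>a. a0 \<circ> a) ` H \<subseteq> H" "(\<lambda>a. inv a0 \<circ> a) ` H \<subseteq> H"
      using perm_groupD(3,4)[OF H] a0 by blast+
  qed
  then show ?thesis by (rule sum.reindex_bij_betw)
qed

lemma sum_right_translate:
  assumes H: "perm_group n H" and a0: "a0 \<in> H"
  shows "(\<Sum>a\<in>H. f (a \<circ> a0)) = (\<Sum>a\<in>H. f a)"
proof -
  have a0p: "a0 permutes {1..n}" using perm_groupD(1)[OF H] a0 unfolding Sn_def by blast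
  have "bij_betw (\<lambda>a. a \<circ> a0) H H"
  proof (rule bij_betw_byWitness[where f'="\<lambda>a. a \<circ> inv a0"])
    show "\<forall>a\<in>H. a \<circ> a0 \<circ> inv a0 = a" "\<forall>a\<in>H. a \<circ> inv a0 \<circ> a0 = a"
      by (simp_all add: o_assoc[symmetric] permutes_inv_o[OF a0p])
    show "(\<lambda>a. a \<circ> a0) ` H \<subseteq> H" "(\<lambda>a. a \<circ> inv a0) ` H \<subseteq> H"
      using perm_groupD(3,4)[OF H] a0 by blast+
  qed
  then show ?thesis by (rule sum.reindex_bij_betw)
qed

section \<open>Young subgroups\<close>

definition young :: "nat \<Rightarrow> nat set set \<Rightarrow> (nat \<Rightarrow> nat) set" where
  "young n P = {a. a permutes {1..n} \<and> (\<forall>A\<in>P. \<forall>x\<in>A. a x \<in> A)}"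

lemma young_mem_iff:
  assumes P: "partition_on {1..n} P" and a: "a \<in> young n P" and A: "A \<in> P"
  shows "a x \<in> A \<longleftrightarrow> x \<in> A"
proof (cases "x \<in> {1..n}")
  case True
  have "a x \<in> block P x" using a block_in[OF P True] unfolding young_def by blast
  then show ?thesis
    using partition_on_block_unique[OF P A block_in(1)[OF P True]] block_in(2)[OF P True]
      a A unfolding young_def by blast
next
  case False
  then show ?thesis using a permutes_not_in unfolding young_def by fastforce
qed

lemma perm_group_young:
  assumes P: "partition_on {1..n} P"
  shows "perm_group n (young n P)"
  unfolding perm_group_def
proof (intro conjI ballI subsetI)
  show "id \<in> young n P" unfolding young_def by (simp add: permutes_id)
next
  fix a b assume "a \<in> young n P" "b \<in> young n P"
  then show "a \<circ> b \<in> young n P" unfolding young_def by (auto intro: permutes_compose)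
next
  fix a assume a: "a \<in> young n P"
  then have ap: "a permutes {1..n}" unfolding young_def by blast
  have "inv a x \<in> A" if "A \<in> P" "x \<in> A" for A x
    using young_mem_iff[OF P a that(1), of "inv a x"] permutes_inverses(1)[OF ap] that by simp
  then show "inv a \<in> young n P" using permutes_inv[OF ap] unfolding young_def by blast
next
  fix a assume "a \<in> young n P"
  then show "a \<in> Sn n" unfolding young_def Sn_def by blast
qed

lemma young_mono:
  assumes P: "partition_on {1..n} P" and Q: "partition_on {1..n} Q" and "finer Q P"
  shows "young n Q \<subseteq> young n P"
proof
  fix a assume a: "a \<in> young n Q"
  have "a x \<in> A" if A: "A \<in> P" and x: "x \<in> A" for A x
  proof -
    have "x \<in> {1..n}" using partition_on_block_subset[OF P A] x by blast
    then obtain B where B: "B \<in> Q" "x \<in> B" using block_in[OF Q] by blast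
    then obtain A' where "A' \<in> P" "B \<subseteq> A'" using \<open>finer Q P\<close> unfolding finer_def by blast
    then have "B \<subseteq> A" using partition_on_block_unique[OF P _ A] B x by blast
    then show ?thesis using a B unfolding young_def by blast
  qed
  then show "a \<in> young n P" using a unfolding young_def by blast
qed

section \<open>Marginals and double cosets\<close>

lemma marginal_block:
  assumes "A \<in> R" "B \<in> C"
  shows "marginal n (prod_part R C) p (A \<times> B) = card {s \<in> {1..n}. s \<in> A \<and> p s \<in> B}"
  using assms unfolding marginal_def prod_part_def by auto

lemma card_permutes_Collect:
  assumes b: "b permutes T"
  shows "card {s \<in> T. P (b s)} = card {t \<in> T. P t}"
proof -
  have "b ` {s \<in> T. P (b s)} = {t \<in> T. P t}"
  proof
    show "b ` {s \<in> T. P (b s)} \<subseteq> {t \<in> T. P t}" using permutes_in_image[OF b] by auto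
    show "{t \<in> T. P t} \<subseteq> b ` {s \<in> T. P (b s)}"
    proof
      fix t assume t: "t \<in> {t \<in> T. P t}"
      have "inv b t \<in> T" using permutes_in_image[OF permutes_inv[OF b]] t by simp
      moreover have "b (inv b t) = t" by (rule permutes_inverses(1)[OF b])
      ultimately show "t \<in> b ` {s \<in> T. P (b s)}" using t by (intro image_eqI[of _ _ "inv b t"]) auto
    qed
  qed
  moreover have "inj_on b {s \<in> T. P (b s)}"
    using permutes_inj_on[OF b] by (rule inj_on_subset) blast
  ultimately show ?thesis using card_image by fastforce
qed

lemma marginal_double_coset:
  assumes R: "partition_on {1..n} R" and C: "partition_on {1..n} C"
    and a: "a \<in> young n C" and b: "b \<in> young n R"
  shows "marginal n (prod_part R C) (a \<circ> p \<circ> b) = marginal n (prod_part R C) p"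
proof
  fix X
  show "marginal n (prod_part R C) (a \<circ> p \<circ> b) X = marginal n (prod_part R C) p X"
  proof (cases "X \<in> prod_part R C")
    case True
    then obtain A B where X: "X = A \<times> B" "A \<in> R" "B \<in> C" unfolding prod_part_def by blast
    have bp: "b permutes {1..n}" using b unfolding young_def by blast
    have "{s \<in> {1..n}. s \<in> A \<and> (a \<circ> p \<circ> b) s \<in> B}
        = {s \<in> {1..n}. (\<lambda>t. t \<in> A \<and> p t \<in> B) (b s)}"
      by (simp add: young_mem_iff[OF C a X(3)] young_mem_iff[OF R b X(2)])
    also have "card \<dots> = card {t \<in> {1..n}. t \<in> A \<and> p t \<in> B}"
      by (rule card_permutes_Collect[OF bp])
    finally show ?thesis using marginal_block[OF X(2,3)] X(1) by simp
  next
    case False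
    then show ?thesis unfolding marginal_def by simp
  qed
qed

lemma count_image_mset_set:
  assumes "finite S"
  shows "count (image_mset f (mset_set S)) x = card {s \<in> S. f s = x}"
proof -
  have "count (image_mset f (mset_set S)) x = (\<Sum>s\<in>f -` {x} \<inter> S. 1)"
    unfolding count_image_mset using assms by (intro sum.cong) auto
  also have "\<dots> = card (f -` {x} \<inter> S)" by simp
  also have "f -` {x} \<inter> S = {s \<in> S. f s = x}" by blast
  finally show ?thesis .
qed

lemma block_preserving_in_young:
  assumes P: "partition_on {1..n} P" and bp: "b permutes {1..n}"
    and blocks: "\<And>s. s \<in> {1..n} \<Longrightarrow> block P (b s) = block P s"
  shows "b \<in> young n P"
proof -
  have "b s \<in> A" if "A \<in> P" "s \<in> A" for A s
  proof -
    have s: "s \<in> {1..n}" using partition_on_block_subset[OF P that(1)] that(2) by blast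
    then show ?thesis
      using block_in(2)[OF P permutes_in_image[OF bp, THEN iffD2, OF s]] blocks[OF s]
        block_eq[OF P that] by simp
  qed
  then show ?thesis using bp unfolding young_def by blast
qed

text \<open>Label each s by the pair of blocks
  containing s and f s; equal marginals say that the labelings for p and q have equal fibre
  sizes, so some permutation transports one labeling into the other.\<close>
lemma same_marginal_transport:
  assumes R: "partition_on {1..n} R" and C: "partition_on {1..n} C"
    and p: "p \<in> Sn n" and q: "q \<in> Sn n"
    and m: "marginal n (prod_part R C) q = marginal n (prod_part R C) p"
  obtains b where "b permutes {1..n}"
    and "\<And>s. s \<in> {1..n} \<Longrightarrow> block R (b s) = block R s"
    and "\<And>s. s \<in> {1..n} \<Longrightarrow> block C (p (b s)) = block C (q s)"
proof -
  have pp: "p permutes {1..n}" and qp: "q permutes {1..n}" using p q unfolding Sn_def by auto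
  define label where "label f s = (block R s, block C (f s))" for f :: "nat \<Rightarrow> nat" and s
  have label_fibre: "{s \<in> {1..n}. label f s = (A, B)} = {s \<in> {1..n}. s \<in> A \<and> f s \<in> B}"
    if "f permutes {1..n}" "A \<in> R" "B \<in> C" for f A B
    using block_eq_iff[OF R _ that(2)] block_eq_iff[OF C _ that(3)] permutes_in_image[OF that(1)]
    unfolding label_def by auto
  have label_range: "label f s \<in> R \<times> C" if "f permutes {1..n}" "s \<in> {1..n}" for f s
    using block_in(1)[OF R that(2)] block_in(1)[OF C permutes_in_image[OF that(1), THEN iffD2, OF that(2)]]
    unfolding label_def by simp
  have fibres: "card {s \<in> {1..n}. label q s = L} = card {s \<in> {1..n}. label p s = L}" for L
  proof (cases "L \<in> R \<times> C")
    case True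
    then obtain A B where L: "L = (A, B)" "A \<in> R" "B \<in> C" by blast
    have "card {s \<in> {1..n}. label q s = L} = marginal n (prod_part R C) q (A \<times> B)"
      using label_fibre[OF qp L(2,3)] marginal_block[OF L(2,3)] L(1) by simp
    also have "\<dots> = marginal n (prod_part R C) p (A \<times> B)" using m by simp
    also have "\<dots> = card {s \<in> {1..n}. label p s = L}"
      using label_fibre[OF pp L(2,3)] marginal_block[OF L(2,3)] L(1) by simp
    finally show ?thesis .
  next
    case False
    have no_fibre: "{s \<in> {1..n}. label f s = L} = {}" if "f permutes {1..n}" for f
      using label_range[OF that] False by blast
    show ?thesis unfolding no_fibre[OF pp] no_fibre[OF qp] ..
  qed
  have "image_mset (label q) (mset_set {1..n}) = image_mset (label p) (mset_set {1..n})"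
    by (rule multiset_eqI) (simp only: count_image_mset_set[OF finite_atLeastAtMost] fibres)
  then obtain b where "b permutes {1..n}" and b: "\<forall>s\<in>{1..n}. label q s = label p (b s)"
    using image_mset_eq_implies_permutes[OF finite_atLeastAtMost] by blast
  moreover have "block R (b s) = block R s \<and> block C (p (b s)) = block C (q s)"
    if "s \<in> {1..n}" for s
  proof -
    have "label q s = label p (b s)" using b that by blast
    then show ?thesis unfolding label_def by simp
  qed
  ultimately show ?thesis using that by blast
qed

text \<open>Conversely to marginal_double_coset, permutations with equal (R x C)-marginals lie in the
  same double coset: with b as above, a = q \<circ> (p \<circ> b)\<inverse> preserves every C-block.\<close>
lemma same_marginal_double_coset:
  assumes R: "partition_on {1..n} R" and C: "partition_on {1..n} C"
    and p: "p \<in> Sn n" and q: "q \<in> Sn n"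
    and m: "marginal n (prod_part R C) q = marginal n (prod_part R C) p"
  shows "\<exists>a\<in>young n C. \<exists>b\<in>young n R. q = a \<circ> p \<circ> b"
proof -
  have pp: "p permutes {1..n}" and qp: "q permutes {1..n}" using p q unfolding Sn_def by auto
  obtain b where bp: "b permutes {1..n}" and b_block: "\<And>s. s \<in> {1..n} \<Longrightarrow> block R (b s) = block R s"
    and pb_block: "\<And>s. s \<in> {1..n} \<Longrightarrow> block C (p (b s)) = block C (q s)"
    using same_marginal_transport[OF R C p q m] by blast
  define g where "g = p \<circ> b"
  have gp: "g permutes {1..n}" unfolding g_def using bp pp by (rule permutes_compose)
  define a where "a = q \<circ> inv g"
  have ap: "a permutes {1..n}" unfolding a_def using permutes_inv[OF gp] qp by (rule permutes_compose)
  have "block C (a y) = block C y" if "y \<in> {1..n}" for y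
  proof -
    have s: "inv g y \<in> {1..n}" using permutes_in_image[OF permutes_inv[OF gp]] that by blast
    have "block C (a y) = block C (q (inv g y))" by (simp add: a_def)
    also have "\<dots> = block C (p (b (inv g y)))" using pb_block[OF s] by simp
    also have "p (b (inv g y)) = y" using permutes_inverses(1)[OF gp] by (simp add: g_def)
    finally show ?thesis .
  qed
  then have "a \<in> young n C" by (rule block_preserving_in_young[OF C ap])
  moreover have "b \<in> young n R" using block_preserving_in_young[OF R bp b_block] .
  moreover have "q = a \<circ> p \<circ> b"
  proof -
    have "a \<circ> p \<circ> b = q \<circ> (inv g \<circ> g)" unfolding a_def g_def by (simp add: o_assoc)
    then show ?thesis using permutes_inv_o(2)[OF gp] by simp
  qed
  ultimately show ?thesis by blast
qed

section \<open>Two-sided invariance\<close>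

definition bi_invariant :: "nat \<Rightarrow> (nat \<Rightarrow> nat) set \<Rightarrow> (nat \<Rightarrow> nat) set \<Rightarrow> ((nat \<Rightarrow> nat) \<Rightarrow> real) \<Rightarrow> bool"
  where "bi_invariant n A B v \<longleftrightarrow> (\<forall>p\<in>Sn n. \<forall>a\<in>A. \<forall>b\<in>B. v (a \<circ> p \<circ> b) = v p)"

lemma bi_invariant_mono:
  "bi_invariant n A B v \<Longrightarrow> A' \<subseteq> A \<Longrightarrow> B' \<subseteq> B \<Longrightarrow> bi_invariant n A' B' v"
  unfolding bi_invariant_def by blast

lemma bi_invariant_combine:
  assumes left: "bi_invariant n A {id} v" and right: "bi_invariant n {id} B v"
    and B: "B \<subseteq> Sn n"
  shows "bi_invariant n A B v"
  unfolding bi_invariant_def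
proof (intro ballI)
  fix p a b assume p: "p \<in> Sn n" and a: "a \<in> A" and b: "b \<in> B"
  have pb: "p \<circ> b \<in> Sn n" using Sn_comp[OF p] b B by blast
  have "v (a \<circ> p \<circ> b) = v (a \<circ> (p \<circ> b) \<circ> id)" by (simp add: o_assoc)
  also have "\<dots> = v (p \<circ> b)" using left pb a unfolding bi_invariant_def by blast
  also have "\<dots> = v (id \<circ> p \<circ> b)" by simp
  also have "\<dots> = v p" using right p b unfolding bi_invariant_def by blast
  finally show "v (a \<circ> p \<circ> b) = v p" .
qed

lemma U_iff_bi_invariant:
  assumes R: "partition_on {1..n} R" and C: "partition_on {1..n} C"
  shows "v \<in> U n (prod_part R C) \<longleftrightarrow> v \<in> RSn n \<and> bi_invariant n (young n C) (young n R) v"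
proof
  assume v: "v \<in> U n (prod_part R C)"
  have "v (a \<circ> p \<circ> b) = v p" if p: "p \<in> Sn n" and a: "a \<in> young n C" and b: "b \<in> young n R" for p a b
  proof -
    have "a \<circ> p \<circ> b \<in> Sn n"
      using Sn_comp[OF Sn_comp[OF _ p]] a b perm_groupD(1)[OF perm_group_young[OF C]]
        perm_groupD(1)[OF perm_group_young[OF R]] by blast
    then show ?thesis using v p marginal_double_coset[OF R C a b] unfolding U_def by blast
  qed
  then show "v \<in> RSn n \<and> bi_invariant n (young n C) (young n R) v"
    using v unfolding U_def bi_invariant_def by blast
next
  assume v: "v \<in> RSn n \<and> bi_invariant n (young n C) (young n R) v"
  have "v p = v q" if "p \<in> Sn n" "q \<in> Sn n"
    and "marginal n (prod_part R C) p = marginal n (prod_part R C) q" for p q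
    using same_marginal_double_coset[OF R C that(1,2) that(3)[symmetric]] v that(1)
    unfolding bi_invariant_def by metis
  then show "v \<in> U n (prod_part R C)" using v unfolding U_def by blast
qed

section \<open>Orthogonal projection\<close>

lemma ip_diff_left: "ip n (u - w) x = ip n u x - ip n w x"
  unfolding ip_def by (simp add: left_diff_distrib sum_subtractf)

lemma U_subspace:
  shows "U n B \<subseteq> RSn n" and "v \<in> U n B \<Longrightarrow> w \<in> U n B \<Longrightarrow> v - w \<in> U n B"
proof -
  show "U n B \<subseteq> RSn n" unfolding U_def by blast
  assume v: "v \<in> U n B" and w: "w \<in> U n B"
  have "(v - w) p = 0" if "p \<notin> Sn n" for p
    using v w that unfolding U_def RSn_def by simp
  moreover have "(v - w) p = (v - w) q"
    if "p \<in> Sn n" "q \<in> Sn n" "marginal n B p = marginal n B q" for p q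
  proof -
    have "v p = v q" "w p = w q" using v w that unfolding U_def by blast+
    then show ?thesis by simp
  qed
  ultimately show "v - w \<in> U n B" unfolding U_def RSn_def by blast
qed

lemma proj_eqI:
  assumes V: "V \<subseteq> RSn n" "\<And>v w. v \<in> V \<Longrightarrow> w \<in> V \<Longrightarrow> v - w \<in> V"
    and w: "w \<in> V" and orth: "\<And>x. x \<in> V \<Longrightarrow> ip n (u - w) x = 0"
  shows "proj n V u = w"
  unfolding proj_def
proof (rule the_equality)
  show "w \<in> V \<and> (\<forall>x\<in>V. ip n (u - w) x = 0)" using w orth by blast
next
  fix w' assume w': "w' \<in> V \<and> (\<forall>x\<in>V. ip n (u - w') x = 0)"
  define d where "d = w - w'"
  have "d \<in> V" unfolding d_def using V(2) w w' by blast
  have "(u - w') - (u - w) = d" unfolding d_def by (simp add: fun_eq_iff)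
  then have "ip n d d = ip n (u - w') d - ip n (u - w) d"
    unfolding ip_diff_left[symmetric] by simp
  also have "\<dots> = 0" using w' orth \<open>d \<in> V\<close> by simp
  finally have "\<forall>p\<in>Sn n. d p = 0"
    unfolding ip_def using sum_nonneg_eq_0_iff[OF finite_Sn[of n], of "\<lambda>p. d p * d p"] by simp
  moreover have "d p = 0" if "p \<notin> Sn n" for p
    using V(1) \<open>d \<in> V\<close> that unfolding RSn_def by blast
  ultimately have "d p = 0" for p by (cases "p \<in> Sn n") auto
  then show "w' = w" unfolding d_def by (simp add: fun_eq_iff)
qed

lemma proj_fixes:
  assumes "V \<subseteq> RSn n" "\<And>v w. v \<in> V \<Longrightarrow> w \<in> V \<Longrightarrow> v - w \<in> V" and "y \<in> V"
  shows "proj n V y = y"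
  using assms by (intro proj_eqI) (simp_all add: ip_def)

section \<open>Averaging over left translations\<close>

definition left_avg :: "nat \<Rightarrow> (nat \<Rightarrow> nat) set \<Rightarrow> ((nat \<Rightarrow> nat) \<Rightarrow> real) \<Rightarrow> (nat \<Rightarrow> nat) \<Rightarrow> real"
  where "left_avg n H u p = (if p \<in> Sn n then (\<Sum>a\<in>H. u (a \<circ> p)) / card H else 0)"

lemma left_avg_RSn: "left_avg n H u \<in> RSn n"
  unfolding RSn_def left_avg_def by simp

lemma left_avg_bi_invariant:
  assumes H: "perm_group n H" and B: "B \<subseteq> Sn n" and u: "bi_invariant n {id} B u"
  shows "bi_invariant n H B (left_avg n H u)"
  unfolding bi_invariant_def
proof (intro ballI)
  fix p a0 b assume p: "p \<in> Sn n" and a0: "a0 \<in> H" and b: "b \<in> B"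
  have HS: "a \<in> H \<Longrightarrow> a \<in> Sn n" for a using perm_groupD(1)[OF H] by blast
  have "(\<Sum>a\<in>H. u (a \<circ> (a0 \<circ> p \<circ> b))) = (\<Sum>a\<in>H. u ((a \<circ> a0) \<circ> p))"
  proof (rule sum.cong)
    fix a assume a: "a \<in> H"
    have "a \<circ> a0 \<circ> p \<in> Sn n" using Sn_comp[OF Sn_comp[OF HS[OF a] HS[OF a0]] p] .
    then have "u (id \<circ> (a \<circ> a0 \<circ> p) \<circ> b) = u (a \<circ> a0 \<circ> p)"
      using u b unfolding bi_invariant_def by blast
    then show "u (a \<circ> (a0 \<circ> p \<circ> b)) = u ((a \<circ> a0) \<circ> p)" by (simp add: o_assoc)
  qed simp
  also have "\<dots> = (\<Sum>a\<in>H. u (a \<circ> p))"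
    using sum_right_translate[OF H a0, of "\<lambda>c. u (c \<circ> p)"] by simp
  finally show "left_avg n H u (a0 \<circ> p \<circ> b) = left_avg n H u p"
    using Sn_comp[OF Sn_comp[OF HS[OF a0] p]] b B p unfolding left_avg_def by auto
qed

lemma ip_left_avg:
  assumes H: "perm_group n H" and x: "bi_invariant n H {id} x"
  shows "ip n (left_avg n H u) x = ip n u x"
proof -
  have xa: "x (a \<circ> p) = x p" if "p \<in> Sn n" "a \<in> H" for a p
    using x that unfolding bi_invariant_def by fastforce
  have "ip n (left_avg n H u) x = (\<Sum>p\<in>Sn n. \<Sum>a\<in>H. u (a \<circ> p) * x p) / card H"
    unfolding ip_def left_avg_def by (simp add: sum_divide_distrib sum_distrib_right)
  also have "(\<Sum>p\<in>Sn n. \<Sum>a\<in>H. u (a \<circ> p) * x p) = (\<Sum>a\<in>H. \<Sum>p\<in>Sn n. u (a \<circ> p) * x p)"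
    by (rule sum.swap)
  also have "\<dots> = (\<Sum>a\<in>H. \<Sum>p\<in>Sn n. u (a \<circ> p) * x (a \<circ> p))"
    using xa by (intro sum.cong refl) simp
  also have "\<dots> = (\<Sum>a\<in>H. ip n u x)"
  proof (rule sum.cong[OF refl])
    fix a assume "a \<in> H"
    then have "a \<in> Sn n" using perm_groupD(1)[OF H] by blast
    then show "(\<Sum>p\<in>Sn n. u (a \<circ> p) * x (a \<circ> p)) = ip n u x"
      unfolding ip_def by (rule sum_left_translate[OF perm_group_Sn])
  qed
  also have "\<dots> = card H * ip n u x" by simp
  finally show ?thesis using perm_group_card_pos[OF H] by simp
qed

lemma proj_U_left_avg:
  assumes R': "partition_on {1..n} R'" and C: "partition_on {1..n} C"
    and u: "bi_invariant n {id} (young n R') u"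
  shows "proj n (U n (prod_part R' C)) u = left_avg n (young n C) u"
proof (rule proj_eqI)
  show "U n (prod_part R' C) \<subseteq> RSn n" by (rule U_subspace(1))
  show "v - w \<in> U n (prod_part R' C)" if "v \<in> U n (prod_part R' C)" "w \<in> U n (prod_part R' C)"
    for v w using that by (rule U_subspace(2))
next
  have "bi_invariant n (young n C) (young n R') (left_avg n (young n C) u)"
    using left_avg_bi_invariant[OF perm_group_young[OF C] perm_groupD(1)[OF perm_group_young[OF R']] u] .
  then show "left_avg n (young n C) u \<in> U n (prod_part R' C)"
    using U_iff_bi_invariant[OF R' C] left_avg_RSn by blast
next
  fix x assume "x \<in> U n (prod_part R' C)"
  then have "bi_invariant n (young n C) {id} x"
    using U_iff_bi_invariant[OF R' C] perm_groupD(2)[OF perm_group_young[OF R']]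
      bi_invariant_mono by blast
  then show "ip n (u - left_avg n (young n C) u) x = 0"
    using ip_left_avg[OF perm_group_young[OF C]] ip_diff_left by simp
qed

text \<open>Both spaces contain U(R x C), and joint invariance follows from the left invariance
  in U(R' x C) and the right invariance in U(R x C').\<close>
lemma U_refinement_inter:
  assumes R: "partition_on {1..n} R" and R': "partition_on {1..n} R'"
    and C: "partition_on {1..n} C" and C': "partition_on {1..n} C'"
    and "finer R' R" and "finer C' C"
  shows "U n (prod_part R C') \<inter> U n (prod_part R' C) = U n (prod_part R C)"
proof (intro equalityI subsetI)
  fix v assume "v \<in> U n (prod_part R C') \<inter> U n (prod_part R' C)"
  then have v: "v \<in> RSn n"
    and inv_RC': "bi_invariant n (young n C') (young n R) v"
    and inv_R'C: "bi_invariant n (young n C) (young n R') v"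
    using U_iff_bi_invariant[OF R C'] U_iff_bi_invariant[OF R' C] by auto
  have "bi_invariant n (young n C) {id} v"
    using bi_invariant_mono[OF inv_R'C] perm_groupD(2)[OF perm_group_young[OF R']] by blast
  moreover have "bi_invariant n {id} (young n R) v"
    using bi_invariant_mono[OF inv_RC'] perm_groupD(2)[OF perm_group_young[OF C']] by blast
  ultimately have "bi_invariant n (young n C) (young n R) v"
    using bi_invariant_combine perm_groupD(1)[OF perm_group_young[OF R]] by blast
  then show "v \<in> U n (prod_part R C)" using U_iff_bi_invariant[OF R C] v by blast
next
  fix v assume "v \<in> U n (prod_part R C)"
  then have v: "v \<in> RSn n" and inv: "bi_invariant n (young n C) (young n R) v"
    using U_iff_bi_invariant[OF R C] by auto
  have "bi_invariant n (young n C') (young n R) v" "bi_invariant n (young n C) (young n R') v"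
    using bi_invariant_mono[OF inv] young_mono[OF R R' \<open>finer R' R\<close>]
      young_mono[OF C C' \<open>finer C' C\<close>] by blast+
  then show "v \<in> U n (prod_part R C') \<inter> U n (prod_part R' C)"
    using U_iff_bi_invariant[OF R C'] U_iff_bi_invariant[OF R' C] v by blast
qed

text \<open>Projecting U(R x C') onto U(R' x C) averages over Y(C), which lands in U(R x C);
  conversely the projection fixes the intersection.\<close>
lemma proj_U_refinement:
  assumes R: "partition_on {1..n} R" and R': "partition_on {1..n} R'"
    and C: "partition_on {1..n} C" and C': "partition_on {1..n} C'"
    and "finer R' R" and "finer C' C"
  shows "proj n (U n (prod_part R' C)) ` U n (prod_part R C')
    = U n (prod_part R C') \<inter> U n (prod_part R' C)"
proof (intro equalityI subsetI)
  fix y assume "y \<in> proj n (U n (prod_part R' C)) ` U n (prod_part R C')"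
  then obtain u where u: "u \<in> U n (prod_part R C')"
    and y: "y = proj n (U n (prod_part R' C)) u" by blast
  have "bi_invariant n (young n C') (young n R) u" using u U_iff_bi_invariant[OF R C'] by blast
  then have right: "bi_invariant n {id} (young n R) u"
    using bi_invariant_mono perm_groupD(2)[OF perm_group_young[OF C']] by blast
  then have "y = left_avg n (young n C) u"
    using y proj_U_left_avg[OF R' C] bi_invariant_mono young_mono[OF R R' \<open>finer R' R\<close>] by blast
  moreover have "left_avg n (young n C) u \<in> U n (prod_part R C)"
    using left_avg_bi_invariant[OF perm_group_young[OF C] perm_groupD(1)[OF perm_group_young[OF R]] right]
      U_iff_bi_invariant[OF R C] left_avg_RSn by blast
  ultimately show "y \<in> U n (prod_part R C') \<inter> U n (prod_part R' C)"
    using U_refinement_inter[OF assms] by simp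
next
  fix y assume y: "y \<in> U n (prod_part R C') \<inter> U n (prod_part R' C)"
  then have "proj n (U n (prod_part R' C)) y = y"
    using proj_fixes[OF U_subspace(1) U_subspace(2)] by blast
  then show "y \<in> proj n (U n (prod_part R' C)) ` U n (prod_part R C')"
    using y by force
qed

theorem lemma2:
  fixes n :: nat and R R' C C' :: "nat set set"
  assumes "partition_on {1..n} R" and "partition_on {1..n} R'"
    and "partition_on {1..n} C" and "partition_on {1..n} C'"
    and "finer R' R" and "finer C' C"
  shows "intersect_orth n (U n (prod_part R C')) (U n (prod_part R' C))
    \<and> U n (prod_part R C') \<inter> U n (prod_part R' C) = U n (prod_part R C)"
  unfolding intersect_orth_def
  using proj_U_refinement[OF assms] U_refinement_inter[OF assms] by blast

end
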